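(* Let $R$ be an Artinian ring, with notation as in the context. Let $h_1\colon R^m\to R^n$ and $h_2\colon R^n\to R^\ell$ be column-adapted $R$-linear maps. Then $h_2\circ h_1\colon R^m\to R^\ell$ is column-adapted.
   Context: Let $R$ be an Artinian ring, $J(R)$ its Jacobson radical, $\overline R=R/J(R)$, and $\bar x$ (resp. $\bar A$) the image of an element (resp. entrywise image of a matrix). $\overline R$ is semisimple, $\overline R\cong \mathrm{Mat}_{\mu_1}(\mathbb D_1)\times\cdots\times\mathrm{Mat}_{\mu_q}(\mathbb D_q)$ with division rings $\mathbb D_k$; put $\mu=\mu_1+\cdots+\mu_q$. Fix orthogonal idempotents $e^k_i\in R$ ($1\le k\le q$, $1\le i\le\mu_k$) with $\sum_{k,i}e^k_i=1$ lifting the orthogonal idempotents $\bar e^k_i$ of $\overline R$ given by the diagonal matrix units of this decomposition (so $e^k_iR\cong e^{k'}_{i'}R$ iff $k=k'$). Let $\mathbb L_{hk}=e^h_1Re^k_1$; then $\overline{\mathbb L_{kk}}=\mathbb D_k$ and $\overline{\mathbb L_{hk}}=0$ for $h\ne k$. The Peirce decomposition $R\cong\mathrm{End}(R_R)=\bigoplus\mathrm{Hom}(e^k_jR,e^h_iR)$, with the isomorphisms $e^h_iR\cong e^h_1R$, gives an injective ring homomorphism (the Artin–Wedderburn embedding) $\Phi\colon R\to\mathrm{Mat}_\mu(R)$, $x\mapsto(\Phi_{hk}(x))_{h,k=1}^q$ a $q\times q$ block matrix with $\Phi_{hk}(x)\in\mathrm{Mat}_{\mu_h,\mu_k}(\mathbb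 L_{hk})$; its reduction $\overline\Phi\colon\overline R\to\mathrm{Mat}_\mu(\overline R)$ sends $\bar x$ to the block-diagonal matrix whose $k$-th block is the $\mathrm{Mat}_{\mu_k}(\mathbb D_k)$-component of $\bar x$. Vectors $R^n$ are columns (right $R$-modules); an $R$-linear $h\colon R^m\to R^n$ is an $n\times m$ matrix, and $\Phi(h)\in\mathrm{Mat}_{\mu n,\mu m}(R)$ is obtained by replacing each entry $x$ by $\Phi(x)$; similarly $\overline\Phi(\bar h)$. Distinguished basis: for $1\le k\le q$, $1\le a\le m$, $1\le r\le\mu_k$, let $\vec v(k)_{(a-1)\mu_k+r}$ be the standard basis vector of $R^{\mu m}$ of index $(a-1)\mu+\mu_1+\cdots+\mu_{k-1}+r$; define $\vec w(k)_i$ ($1\le i\le\mu_kn$) in $R^{\mu n}$ in the same way, bars denoting images in $\overline R^{\mu m},\overline R^{\mu n}$. Then $\overline\Phi(\bar h)(\overline{\vec v(k)_j})\in\bigoplus_{i=1}^{\mu_kn}\overline{\vec w(k)_i}\cdot\mathbb D_k$. For surjective $h$ and each $k$, $\mathfrak S(h,k)$ is the smallest, in the lexicographic order on increasingly sorted sequences, subset $S\subset\{1,\dots,\mu_km\}$ such that $\{\overline\Phi(\bar h)(\overline{\vec v(k)_j}):j\in S\}$ is a basis of the right $\mathbb D_k$-module $\bigoplus_{i=1}^{\mu_kn}\overline{\vec w(k)_i}\cdot\mathbb D_k$ (it has $\mu_kn$ elements). A surjective $R$-linear $h\colon R^m\to R^n$ is column-adapted if (i) for every $k$, writing $\mathfrak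 S(h,k)=\{j_1<\cdots<j_{\mu_kn}\}$, $\overline\Phi(\bar h)(\overline{\vec v(k)_{j_i}})=\overline{\vec w(k)_i}$ for all $i$, and (ii) $\Phi(h)(\vec v(k)_{j_i})=\vec w(k)_i$ for all $k$ and $1\le i\le\mu_kn$. *)

theory Defs
  imports Main
begin

(* All indices are 0-based: blocks k < q, positions i < mu k inside block k.
   The paper's e^k_i (1-based) is  e k (i-1);  e^k_1 is  e k 0. *)

definition right_ideal :: "'a::ring_1 set \<Rightarrow> bool" where
  "right_ideal I \<longleftrightarrow> 0 \<in> I \<and> (\<forall>x\<in>I. \<forall>y\<in>I. x + y \<in> I) \<and> (\<forall>x\<in>I. - x \<in> I)
     \<and> (\<forall>x\<in>I. \<forall>r. x * r \<in> I)"

definition right_artinian :: "'a::ring_1 itself \<Rightarrow> bool" where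
  "right_artinian _ \<longleftrightarrow>
     \<not> (\<exists>f :: nat \<Rightarrow> 'a set. (\<forall>i. right_ideal (f i)) \<and> (\<forall>i. f (Suc i) \<subset> f i))"

definition maximal_right_ideal :: "'a::ring_1 set \<Rightarrow> bool" where
  "maximal_right_ideal M \<longleftrightarrow> right_ideal M \<and> M \<noteq> UNIV \<and>
     (\<forall>I. right_ideal I \<and> M \<subseteq> I \<longrightarrow> I = M \<or> I = UNIV)"

text \<open>Jacobson radical: intersection of all maximal right ideals.
  Elements of R/J(R) are represented by elements of R; x-bar = y-bar iff x - y : J.\<close>
definition jacobson_radical :: "'a::ring_1 set" where
  "jacobson_radical = \<Inter> {M. maximal_right_ideal M}"

definition blk_off :: "(nat \<Rightarrow> nat) \<Rightarrow> nat \<Rightarrow> nat" where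
  "blk_off mu k = (\<Sum>k'<k. mu k')"

definition mu_total :: "nat \<Rightarrow> (nat \<Rightarrow> nat) \<Rightarrow> nat" where
  "mu_total q mu = (\<Sum>k<q. mu k)"

text \<open>Standing assumptions:
  e k i (k<q, i<mu k) orthogonal idempotents of R summing to 1, lifting the diagonal
  matrix units eps k i i of a decomposition R/J = prod_k Mat_{mu k}(D_k), D_k division rings
  (given by a full system of matrix units eps of R/J with division-ring corners
  D_k = eps k 0 0 (R/J) eps k 0 0);
  u h i : e^h_i R -> e^h_1 R and v h i its inverse, i.e. chosen isomorphisms
  e^h_i R ~ e^h_1 R given by left multiplication by u h i in e^h_1 R e^h_i, v h i in e^h_i R e^h_1.\<close>
definition AW_setup ::
  "nat \<Rightarrow> (nat \<Rightarrow> nat) \<Rightarrow> (nat \<Rightarrow> nat \<Rightarrow> 'a::ring_1) \<Rightarrow> (nat \<Rightarrow> nat \<Rightarrow> 'a) \<Rightarrow> (nat \<Rightarrow> nat \<Rightarrow> 'a) \<Rightarrow> bool"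
where
  "AW_setup q mu e u v \<longleftrightarrow>
    (\<forall>k<q. 0 < mu k) \<and>
    (\<forall>k<q. \<forall>i<mu k. e k i * e k i = e k i) \<and>
    (\<forall>k<q. \<forall>i<mu k. \<forall>k'<q. \<forall>i'<mu k'. (k, i) \<noteq> (k', i') \<longrightarrow> e k i * e k' i' = 0) \<and>
    (\<Sum>k<q. \<Sum>i<mu k. e k i) = 1 \<and>
    (\<exists>eps :: nat \<Rightarrow> nat \<Rightarrow> nat \<Rightarrow> 'a.
       (\<forall>k<q. \<forall>i<mu k. \<forall>j<mu k. \<forall>k'<q. \<forall>i'<mu k'. \<forall>j'<mu k'.
          eps k i j * eps k' i' j' - (if k = k' \<and> j = i' then eps k i j' else 0) \<in> jacobson_radical) \<and>
       (\<forall>k<q. \<forall>i<mu k. eps k i i - e k i \<in> jacobson_radical) \<and>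
       (\<forall>k<q. eps k 0 0 \<notin> jacobson_radical \<and>
          (\<forall>x. eps k 0 0 * x * eps k 0 0 \<notin> jacobson_radical \<longrightarrow>
             (\<exists>y. eps k 0 0 * x * eps k 0 0 * (eps k 0 0 * y * eps k 0 0) - eps k 0 0 \<in> jacobson_radical \<and>
                  eps k 0 0 * y * eps k 0 0 * (eps k 0 0 * x * eps k 0 0) - eps k 0 0 \<in> jacobson_radical)))) \<and>
    (\<forall>h<q. \<forall>i<mu h.
       u h i = e h 0 * u h i * e h i \<and> v h i = e h i * v h i * e h 0 \<and>
       u h i * v h i = e h 0 \<and> v h i * u h i = e h i)"

text \<open>The Artin--Wedderburn embedding Phi : R -> Mat_mu(R); entry at (off h + i, off k + j)
  is u h i * x * v k j, an element of L_{hk} = e^h_1 R e^k_1.\<close>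
definition AW_phi ::
  "nat \<Rightarrow> (nat \<Rightarrow> nat) \<Rightarrow> (nat \<Rightarrow> nat \<Rightarrow> 'a::ring_1) \<Rightarrow> (nat \<Rightarrow> nat \<Rightarrow> 'a) \<Rightarrow> 'a \<Rightarrow> nat \<Rightarrow> nat \<Rightarrow> 'a"
where
  "AW_phi q mu u v x a b =
     (\<Sum>h<q. \<Sum>i<mu h. \<Sum>k<q. \<Sum>j<mu k.
        if a = blk_off mu h + i \<and> b = blk_off mu k + j then u h i * x * v k j else 0)"

text \<open>Phi applied entrywise to a matrix H (rows alpha, columns beta): a (mu n) x (mu m) matrix.\<close>
definition AW_phi_mat ::
  "nat \<Rightarrow> (nat \<Rightarrow> nat) \<Rightarrow> (nat \<Rightarrow> nat \<Rightarrow> 'a::ring_1) \<Rightarrow> (nat \<Rightarrow> nat \<Rightarrow> 'a) \<Rightarrow>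
   (nat \<Rightarrow> nat \<Rightarrow> 'a) \<Rightarrow> nat \<Rightarrow> nat \<Rightarrow> 'a"
where
  "AW_phi_mat q mu u v H p s =
     AW_phi q mu u v (H (p div mu_total q mu) (s div mu_total q mu))
       (p mod mu_total q mu) (s mod mu_total q mu)"

text \<open>Distinguished basis: (0-based) j-th vector of block k, j < mu k * m,
  is the standard basis vector of index (j div mu k) * mu + off k + (j mod mu k).\<close>
definition dist_idx :: "nat \<Rightarrow> (nat \<Rightarrow> nat) \<Rightarrow> nat \<Rightarrow> nat \<Rightarrow> nat" where
  "dist_idx q mu k j = (j div mu k) * mu_total q mu + blk_off mu k + j mod mu k"

text \<open>An R-linear map R^m -> R^n as an n x m matrix; surjectivity.\<close>
definition lin_surj :: "nat \<Rightarrow> nat \<Rightarrow> (nat \<Rightarrow> nat \<Rightarrow> 'a::ring_1) \<Rightarrow> bool" where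
  "lin_surj m n H \<longleftrightarrow> (\<forall>y :: nat \<Rightarrow> 'a. \<exists>x. \<forall>a<n. (\<Sum>b<m. H a b * x b) = y a)"

text \<open>Composition H2 o H1 of H1 : R^m -> R^n and H2 : R^n -> R^l (matrix product).\<close>
definition mat_comp :: "nat \<Rightarrow> (nat \<Rightarrow> nat \<Rightarrow> 'a::ring_1) \<Rightarrow> (nat \<Rightarrow> nat \<Rightarrow> 'a) \<Rightarrow> nat \<Rightarrow> nat \<Rightarrow> 'a" where
  "mat_comp n H2 H1 = (\<lambda>c b. \<Sum>a<n. H2 c a * H1 a b)"

text \<open>The corner L_kk = e^k_1 R e^k_1; D_k is its image in R/J.\<close>
definition corner :: "(nat \<Rightarrow> nat \<Rightarrow> 'a::ring_1) \<Rightarrow> nat \<Rightarrow> 'a set" where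
  "corner e k = {e k 0 * x * e k 0 | x. True}"

text \<open>{Phi-bar(H-bar)(v-bar(k)_j) : j in S} is a basis (as an indexed family) of the right
  D_k-module (+)_{i} w-bar(k)_i D_k inside (R/J)^{mu n}.\<close>
definition is_basis_set ::
  "nat \<Rightarrow> (nat \<Rightarrow> nat) \<Rightarrow> (nat \<Rightarrow> nat \<Rightarrow> 'a::ring_1) \<Rightarrow> (nat \<Rightarrow> nat \<Rightarrow> 'a) \<Rightarrow> (nat \<Rightarrow> nat \<Rightarrow> 'a) \<Rightarrow>
   nat \<Rightarrow> nat \<Rightarrow> (nat \<Rightarrow> nat \<Rightarrow> 'a) \<Rightarrow> nat \<Rightarrow> nat set \<Rightarrow> bool"
where
  "is_basis_set q mu e u v m n H k S \<longleftrightarrow>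
     S \<subseteq> {..<mu k * m} \<and>
     (\<forall>c. (\<forall>j\<in>S. c j \<in> corner e k) \<and>
          (\<forall>p<mu_total q mu * n.
             (\<Sum>j\<in>S. AW_phi_mat q mu u v H p (dist_idx q mu k j) * c j) \<in> jacobson_radical)
        \<longrightarrow> (\<forall>j\<in>S. c j \<in> jacobson_radical)) \<and>
     (\<forall>d. (\<forall>i<mu k * n. d i \<in> corner e k) \<longrightarrow>
        (\<exists>c. (\<forall>j\<in>S. c j \<in> corner e k) \<and>
          (\<forall>p<mu_total q mu * n.
             (\<Sum>j\<in>S. AW_phi_mat q mu u v H p (dist_idx q mu k j) * c j)
             - (\<Sum>i<mu k * n. if p = dist_idx q mu k i then d i else 0) \<in> jacobson_radical)))"

definition frakS ::
  "nat \<Rightarrow> (nat \<Rightarrow> nat) \<Rightarrow> (nat \<Rightarrow> nat \<Rightarrow> 'a::ring_1) \<Rightarrow> (nat \<Rightarrow> nat \<Rightarrow> 'a) \<Rightarrow> (nat \<Rightarrow> nat \<Rightarrow> 'a) \<Rightarrow>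
   nat \<Rightarrow> nat \<Rightarrow> (nat \<Rightarrow> nat \<Rightarrow> 'a) \<Rightarrow> nat \<Rightarrow> nat set \<Rightarrow> bool"
where
  "frakS q mu e u v m n H k S \<longleftrightarrow>
     is_basis_set q mu e u v m n H k S \<and>
     (\<forall>S'. is_basis_set q mu e u v m n H k S' \<longrightarrow>
        S = S' \<or> (sorted_list_of_set S, sorted_list_of_set S') \<in> lexord {(a, b). a < b})"

text \<open>Column-adapted. The basis vector w(k)_i is the standard basis vector whose nonzero
  entry is the identity e^k_1 of L_kk (resp. of D_k after reduction).\<close>
definition column_adapted ::
  "nat \<Rightarrow> (nat \<Rightarrow> nat) \<Rightarrow> (nat \<Rightarrow> nat \<Rightarrow> 'a::ring_1) \<Rightarrow> (nat \<Rightarrow> nat \<Rightarrow> 'a) \<Rightarrow> (nat \<Rightarrow> nat \<Rightarrow> 'a) \<Rightarrow>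
   nat \<Rightarrow> nat \<Rightarrow> (nat \<Rightarrow> nat \<Rightarrow> 'a) \<Rightarrow> bool"
where
  "column_adapted q mu e u v m n H \<longleftrightarrow>
     lin_surj m n H \<and>
     (\<forall>k<q. \<exists>S. frakS q mu e u v m n H k S \<and>
        (let js = sorted_list_of_set S in
          (\<forall>i<mu k * n. \<forall>p<mu_total q mu * n.
             AW_phi_mat q mu u v H p (dist_idx q mu k (js ! i))
             - (if p = dist_idx q mu k i then e k 0 else 0) \<in> jacobson_radical) \<and>
          (\<forall>i<mu k * n. \<forall>p<mu_total q mu * n.
             AW_phi_mat q mu u v H p (dist_idx q mu k (js ! i))
             = (if p = dist_idx q mu k i then e k 0 else 0))))"

end

(* For a fixed block k, work modulo the Jacobson radical J: the corner e_1^k R e_1^k becomes the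
   division ring D_k, and frak S(h,k) is the lexicographically least set of columns of Phi(h)
   forming a basis modulo J. When these columns are exact unit vectors, lexicographic minimality is
   equivalent to a reduced column echelon form modulo J: a non-pivot column left of the t-th pivot
   vanishes modulo J outside the first t pivot rows, since otherwise it could be adjoined to the
   basis or exchanged for a later pivot column. As Phi is multiplicative, the column of
   Phi(h2 h1) at the a-th pivot of h1 is the a-th column of Phi(h2); so composing the pivot maps
   yields unit columns for h2 h1, and the echelon form passes to the product. *)

theory Submission
  imports Defs
begin

section \<open>The Jacobson radical is a two-sided ideal\<close>

abbreviation Jac :: "'a::ring_1 set" where
  "Jac \<equiv> jacobson_radical"

lemma in_Jac_iff: "x \<in> Jac \<longleftrightarrow> (\<forall>M. maximal_right_ideal M \<longrightarrow> x \<in> M)"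
  by (auto simp: jacobson_radical_def)

lemma Jac_zero: "0 \<in> Jac"
  and Jac_add: "x \<in> Jac \<Longrightarrow> y \<in> Jac \<Longrightarrow> x + y \<in> Jac"
  and Jac_uminus: "x \<in> Jac \<Longrightarrow> - x \<in> Jac"
  and Jac_mult_right: "x \<in> Jac \<Longrightarrow> x * r \<in> Jac"
  by (auto simp: in_Jac_iff maximal_right_ideal_def right_ideal_def)

lemma Jac_uminus_iff: "- x \<in> Jac \<longleftrightarrow> x \<in> Jac"
  using Jac_uminus[of x] Jac_uminus[of "- x"] by auto

lemma Jac_diff: "x \<in> Jac \<Longrightarrow> y \<in> Jac \<Longrightarrow> x - y \<in> Jac"
  using Jac_add[of x "- y"] Jac_uminus[of y] by simp

lemma Jac_sum: "(\<And>i. i \<in> A \<Longrightarrow> f i \<in> Jac) \<Longrightarrow> sum f A \<in> Jac"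
  by (induct A rule: infinite_finite_induct) (auto intro: Jac_zero Jac_add)

lemma right_ideal_add_principal:
  assumes M: "right_ideal M"
  shows "right_ideal {m + a * s | m s. m \<in> M}" (is "right_ideal ?K")
proof -
  have mem: "m + a * s \<in> ?K" if "m \<in> M" for m s using that by blast
  show ?thesis unfolding right_ideal_def
  proof (intro conjI ballI allI)
    show "0 \<in> ?K" using M mem[of 0 0] by (simp add: right_ideal_def)
  next
    fix x y assume "x \<in> ?K" "y \<in> ?K"
    then obtain m1 s1 m2 s2 where "x = m1 + a * s1" "y = m2 + a * s2" "m1 \<in> M" "m2 \<in> M" by auto
    then show "x + y \<in> ?K"
      using M mem[of "m1 + m2" "s1 + s2"] by (simp add: right_ideal_def algebra_simps)
  next
    fix x assume "x \<in> ?K"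
    then obtain m1 s1 where "x = m1 + a * s1" "m1 \<in> M" by auto
    then show "- x \<in> ?K" using M mem[of "- m1" "- s1"] by (simp add: right_ideal_def)
  next
    fix x r assume "x \<in> ?K"
    then obtain m1 s1 where "x = m1 + a * s1" "m1 \<in> M" by auto
    then show "x * r \<in> ?K"
      using M mem[of "m1 * r" "s1 * r"] by (simp add: right_ideal_def algebra_simps)
  qed
qed

lemma maximal_right_ideal_colon:
  fixes a :: "'a::ring_1"
  assumes M: "maximal_right_ideal M" and proper: "{r. a * r \<in> M} \<noteq> UNIV"
  shows "maximal_right_ideal {r. a * r \<in> M}"
proof -
  have RM: "right_ideal M" using M by (simp add: maximal_right_ideal_def)
  have "I = {r. a * r \<in> M} \<or> I = UNIV" if I: "right_ideal I" "{r. a * r \<in> M} \<subseteq> I" for I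
  proof (cases "I \<subseteq> {r. a * r \<in> M}")
    case True
    then show ?thesis using I by auto
  next
    case False
    then obtain r0 where r0: "r0 \<in> I" "a * r0 \<notin> M" by auto
    let ?K = "{m + a * r0 * s | m s. m \<in> M}"
    have "right_ideal ?K" using right_ideal_add_principal[OF RM, of "a * r0"] by simp
    moreover have "M \<subseteq> ?K"
    proof
      fix x assume "x \<in> M"
      then show "x \<in> ?K" by (intro CollectI exI[of _ x] exI[of _ 0]) simp
    qed
    moreover have "a * r0 \<in> ?K" using RM by (intro CollectI exI[of _ 0] exI[of _ 1]) (simp add: right_ideal_def)
    ultimately have "?K = UNIV" using M r0(2) unfolding maximal_right_ideal_def by blast
    then obtain m s where ms: "1 = m + a * r0 * s" "m \<in> M" by blast
    have "r \<in> I" for r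
    proof -
      have "a * (r - r0 * s * (a * r)) = (1 - a * r0 * s) * (a * r)" by (simp add: algebra_simps)
      also have "1 - a * r0 * s = m" using ms(1) by (simp add: algebra_simps)
      finally have "r - r0 * s * (a * r) \<in> I" using I RM ms(2) by (auto simp: right_ideal_def)
      moreover have "r0 * s * (a * r) \<in> I" using I(1) r0(1) by (simp add: right_ideal_def mult.assoc)
      ultimately have "(r - r0 * s * (a * r)) + r0 * s * (a * r) \<in> I"
        using I(1) unfolding right_ideal_def by blast
      then show ?thesis by simp
    qed
    then show ?thesis by auto
  qed
  moreover have "right_ideal {r. a * r \<in> M}"
    using RM by (auto simp: right_ideal_def distrib_left mult.assoc[symmetric])
  ultimately show ?thesis using proper by (auto simp: maximal_right_ideal_def)
qed

lemma Jac_mult_left: "x \<in> Jac \<Longrightarrow> r * x \<in> Jac"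
  unfolding in_Jac_iff
proof (intro allI impI)
  fix M :: "'a set" assume "\<forall>M. maximal_right_ideal M \<longrightarrow> x \<in> M" and M: "maximal_right_ideal M"
  then show "r * x \<in> M"
    using maximal_right_ideal_colon[OF M, of r] by (cases "{y. r * y \<in> M} = UNIV") auto
qed

lemma Jac_cong_trans: "a - b \<in> Jac \<Longrightarrow> b - c \<in> Jac \<Longrightarrow> a - c \<in> Jac"
  using Jac_add[of "a - b" "b - c"] by simp

lemma Jac_cong_sym: "a - b \<in> Jac \<Longrightarrow> b - a \<in> Jac"
  using Jac_uminus[of "a - b"] by simp

lemma Jac_cong_mult: "a - a' \<in> Jac \<Longrightarrow> b - b' \<in> Jac \<Longrightarrow> a * b - a' * b' \<in> Jac"
proof -
  assume "a - a' \<in> Jac" "b - b' \<in> Jac"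
  then have "(a - a') * b + a' * (b - b') \<in> Jac" by (intro Jac_add Jac_mult_right Jac_mult_left)
  then show ?thesis by (simp add: algebra_simps)
qed

lemma Jac_cong_in: "a - b \<in> Jac \<Longrightarrow> b \<in> Jac \<Longrightarrow> a \<in> Jac"
  using Jac_add[of "a - b" b] by simp

section \<open>Sorted lists of finite sets of indices\<close>

lemma sorted_list_of_set_strict_sorted:
  "sorted_wrt (<) (xs :: 'a::linorder list) \<Longrightarrow> sorted_list_of_set (set xs) = xs"
  by (simp add: sorted_list_of_set.idem_if_sorted_distinct strict_sorted_iff)

lemma sorted_list_of_set_image_strict_mono:
  assumes "strict_mono_on {..<N} (\<pi> :: nat \<Rightarrow> 'a::linorder)"
  shows "sorted_list_of_set (\<pi> ` {..<N}) = map \<pi> [0..<N]"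
proof -
  have "sorted_wrt (<) (map \<pi> [0..<N])"
    unfolding sorted_wrt_iff_nth_less using assms by (simp add: strict_mono_onD)
  then show ?thesis using sorted_list_of_set_strict_sorted by (metis atLeast0LessThan set_map set_upt)
qed

lemma strict_mono_on_nth_sorted_list_of_set:
  "strict_mono_on {..<length (sorted_list_of_set S)} ((!) (sorted_list_of_set (S :: 'a::linorder set)))"
  by (intro strict_mono_onI) (simp add: sorted_wrt_nth_less)

lemma image_nth_sorted_list_of_set:
  "finite S \<Longrightarrow> (!) (sorted_list_of_set S) ` {..<length (sorted_list_of_set S)} = S"
  by (metis atLeast0LessThan image_set map_nth set_sorted_list_of_set set_upt)

lemma lexordp_sorted_list_of_set_agree_below:
  fixes A B :: "'a::linorder set"
  assumes "finite A" "finite B" "j \<in> A" "j \<notin> B" "A \<inter> {..<j} = B \<inter> {..<j}" "b \<in> B" "j < b"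
  shows "ord_class.lexordp (sorted_list_of_set A) (sorted_list_of_set B)"
proof -
  have split: "sorted_list_of_set X = sorted_list_of_set (X \<inter> {..<j}) @ sorted_list_of_set (X \<inter> {j..})"
    (is "_ = ?l") if "finite X" for X :: "'a set"
  proof -
    have "sorted_wrt (<) ?l" using that by (auto simp: sorted_wrt_append intro: less_le_trans)
    moreover have "set ?l = X" using that by auto
    ultimately show ?thesis using sorted_list_of_set_strict_sorted by metis
  qed
  have A: "Min (A \<inter> {j..}) = j" using assms by (intro Min_eqI) auto
  have B: "Min (B \<inter> {j..}) \<in> B \<inter> {j..}" using assms by (intro Min_in) auto
  then have jB: "j < Min (B \<inter> {j..})" using assms(4) by (cases "Min (B \<inter> {j..}) = j") auto
  have "A \<inter> {j..} \<noteq> {}" "B \<inter> {j..} \<noteq> {}" using assms by auto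
  then show ?thesis
    using split[of A] split[of B] sorted_list_of_set_nonempty[of "A \<inter> {j..}"]
      sorted_list_of_set_nonempty[of "B \<inter> {j..}"] assms(1,2,5) A jB
    by (simp add: lexordp_append_left_rightI)
qed

lemma lexordp_map_upt_cases:
  assumes "ord_class.lexordp xs (map (\<pi> :: nat \<Rightarrow> 'a::linorder) [0..<N])"
  obtains (prefix) L where "L < N" "xs = map \<pi> [0..<L]"
    | (differ) t a vs where "t < N" "a < \<pi> t" "xs = map \<pi> [0..<t] @ a # vs"
  using assms unfolding lexordp_iff
proof (elim disjE exE conjE)
  fix x vs assume eq: "map \<pi> [0..<N] = xs @ x # vs"
  have "length xs < N" using arg_cong[OF eq, of length] by simp
  moreover have "xs = map \<pi> [0..<length xs]"
    using arg_cong[OF eq, of "take (length xs)"] \<open>length xs < N\<close> by (simp add: take_map take_upt)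
  ultimately show thesis using prefix by blast
next
  fix us a b vs ws assume "a < b" "xs = us @ a # vs" and eq: "map \<pi> [0..<N] = us @ b # ws"
  have t: "length us < N" using arg_cong[OF eq, of length] by simp
  moreover have "b = \<pi> (length us)" using arg_cong[OF eq, of "\<lambda>l. l ! length us"] t by simp
  moreover have "us = map \<pi> [0..<length us]"
    using arg_cong[OF eq, of "take (length us)"] t by (simp add: take_map take_upt)
  ultimately show thesis using differ \<open>a < b\<close> \<open>xs = us @ a # vs\<close> by metis
qed

section \<open>Bases modulo the radical\<close>

definition corner_ring :: "'a::ring_1 \<Rightarrow> 'a set" where
  "corner_ring E = {E * x * E | x. True}"

lemma corner_eq_corner_ring: "corner e k = corner_ring (e k 0)"
  by (simp add: corner_def corner_ring_def)

lemma in_corner_ring_iff: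
  assumes "E * E = E"
  shows "x \<in> corner_ring E \<longleftrightarrow> E * x = x \<and> x * E = x"
proof
  assume "x \<in> corner_ring E"
  then obtain y where "x = E * y * E" by (auto simp: corner_ring_def)
  then show "E * x = x \<and> x * E = x" using assms by (simp add: mult.assoc[symmetric]) (simp add: mult.assoc)
next
  assume "E * x = x \<and> x * E = x"
  then show "x \<in> corner_ring E" unfolding corner_ring_def by (intro CollectI exI[of _ x]) simp
qed

definition pivot_vec :: "(nat \<Rightarrow> nat) \<Rightarrow> nat \<Rightarrow> (nat \<Rightarrow> 'a::ring_1) \<Rightarrow> nat \<Rightarrow> 'a" where
  "pivot_vec di N d p = (\<Sum>i<N. if p = di i then d i else 0)"

definition unit_col :: "(nat \<Rightarrow> nat) \<Rightarrow> 'a::ring_1 \<Rightarrow> nat \<Rightarrow> nat \<Rightarrow> 'a" where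
  "unit_col di E i p = (if p = di i then E else 0)"

text \<open>A matrix is given by its columns: \<open>col j p\<close> is the entry in row \<open>p < R\<close> of
  column \<open>j\<close>. Coefficients range over the corner ring of \<open>E\<close>, which modulo the radical
  is the division ring \<open>D k\<close> of the paper, and the target module is spanned by the unit
  vectors in the rows \<open>di ` {..<N}\<close>.\<close>
definition indep_mod_Jac :: "(nat \<Rightarrow> nat \<Rightarrow> 'a::ring_1) \<Rightarrow> nat \<Rightarrow> 'a \<Rightarrow> nat set \<Rightarrow> bool" where
  "indep_mod_Jac col R E S \<longleftrightarrow>
     (\<forall>c. (\<forall>j\<in>S. c j \<in> corner_ring E) \<and> (\<forall>p<R. (\<Sum>j\<in>S. col j p * c j) \<in> Jac)
        \<longrightarrow> (\<forall>j\<in>S. c j \<in> Jac))"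

definition spans_mod_Jac ::
  "(nat \<Rightarrow> nat \<Rightarrow> 'a::ring_1) \<Rightarrow> nat \<Rightarrow> nat \<Rightarrow> (nat \<Rightarrow> nat) \<Rightarrow> 'a \<Rightarrow> nat set \<Rightarrow> bool" where
  "spans_mod_Jac col R N di E S \<longleftrightarrow>
     (\<forall>d. (\<forall>i<N. d i \<in> corner_ring E) \<longrightarrow>
        (\<exists>c. (\<forall>j\<in>S. c j \<in> corner_ring E) \<and>
             (\<forall>p<R. (\<Sum>j\<in>S. col j p * c j) - pivot_vec di N d p \<in> Jac)))"

definition basis_mod_Jac ::
  "(nat \<Rightarrow> nat \<Rightarrow> 'a::ring_1) \<Rightarrow> nat \<Rightarrow> nat \<Rightarrow> nat \<Rightarrow> (nat \<Rightarrow> nat) \<Rightarrow> 'a \<Rightarrow> nat set \<Rightarrow> bool" where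
  "basis_mod_Jac col P R N di E S \<longleftrightarrow>
     S \<subseteq> {..<P} \<and> indep_mod_Jac col R E S \<and> spans_mod_Jac col R N di E S"

definition least_basis_mod_Jac ::
  "(nat \<Rightarrow> nat \<Rightarrow> 'a::ring_1) \<Rightarrow> nat \<Rightarrow> nat \<Rightarrow> nat \<Rightarrow> (nat \<Rightarrow> nat) \<Rightarrow> 'a \<Rightarrow> nat set \<Rightarrow> bool" where
  "least_basis_mod_Jac col P R N di E S \<longleftrightarrow> basis_mod_Jac col P R N di E S \<and>
     (\<forall>S'. basis_mod_Jac col P R N di E S' \<longrightarrow>
        S = S' \<or> ord_class.lexordp (sorted_list_of_set S) (sorted_list_of_set S'))"

text \<open>Reduced column echelon form modulo the radical, with pivot columns \<open>\<pi> i\<close> and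
  pivot rows \<open>di i\<close>.\<close>
definition echelon_mod_Jac ::
  "(nat \<Rightarrow> nat \<Rightarrow> 'a::ring_1) \<Rightarrow> nat \<Rightarrow> nat \<Rightarrow> nat \<Rightarrow> (nat \<Rightarrow> nat) \<Rightarrow> (nat \<Rightarrow> nat) \<Rightarrow> bool" where
  "echelon_mod_Jac col P R N di \<pi> \<longleftrightarrow>
     (\<forall>j t p. j < P \<longrightarrow> j \<notin> \<pi> ` {..<N} \<longrightarrow> t < N \<longrightarrow> j < \<pi> t \<longrightarrow> p < R \<longrightarrow> p \<notin> di ` {..<t}
        \<longrightarrow> col j p \<in> Jac)"

lemma zero_in_corner_ring: "0 \<in> corner_ring E"
  unfolding corner_ring_def by (intro CollectI exI[of _ 0]) simp

lemma indep_mod_Jac_subset: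
  assumes "indep_mod_Jac col R E S" "T \<subseteq> S" "finite S"
  shows "indep_mod_Jac col R E T"
  unfolding indep_mod_Jac_def
proof (intro allI impI)
  fix c assume c: "(\<forall>j\<in>T. c j \<in> corner_ring E) \<and> (\<forall>p<R. (\<Sum>j\<in>T. col j p * c j) \<in> Jac)"
  let ?c = "\<lambda>j. if j \<in> T then c j else 0"
  have "(\<Sum>j\<in>S. col j p * ?c j) = (\<Sum>j\<in>T. col j p * c j)" for p
    using assms(2,3) by (intro sum.mono_neutral_cong_right) auto
  moreover have "\<forall>j\<in>S. ?c j \<in> corner_ring E" using c zero_in_corner_ring[of E] by auto
  ultimately have "\<forall>j\<in>S. ?c j \<in> Jac"
    using c assms(1)[unfolded indep_mod_Jac_def, THEN spec[of _ ?c]] by auto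
  then show "\<forall>j\<in>T. c j \<in> Jac" using assms(2) by (metis subsetD)
qed

lemma spans_mod_Jac_mono:
  assumes "spans_mod_Jac col R N di E S" "S \<subseteq> T" "finite T"
  shows "spans_mod_Jac col R N di E T"
  unfolding spans_mod_Jac_def
proof (intro allI impI)
  fix d assume "\<forall>i<N. d i \<in> corner_ring E"
  then obtain c where c: "\<forall>j\<in>S. c j \<in> corner_ring E"
    "\<forall>p<R. (\<Sum>j\<in>S. col j p * c j) - pivot_vec di N d p \<in> Jac"
    using assms(1) unfolding spans_mod_Jac_def by blast
  let ?c = "\<lambda>j. if j \<in> S then c j else 0"
  have "(\<Sum>j\<in>T. col j p * ?c j) = (\<Sum>j\<in>S. col j p * c j)" for p
    using assms(2,3) by (intro sum.mono_neutral_cong_right) auto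
  then show "\<exists>c. (\<forall>j\<in>T. c j \<in> corner_ring E) \<and>
      (\<forall>p<R. (\<Sum>j\<in>T. col j p * c j) - pivot_vec di N d p \<in> Jac)"
    using c zero_in_corner_ring by (intro exI[of _ ?c]) auto
qed

text \<open>Block \<open>k\<close> of \<open>\<Phi>(h)\<close> is an instance (\<open>corner_columns_phi_col\<close>), with
  \<open>di = dist_idx q mu k\<close> and \<open>E = e k 0\<close>.\<close>
locale corner_columns =
  fixes col :: "nat \<Rightarrow> nat \<Rightarrow> 'a::ring_1" and P R N :: nat and di :: "nat \<Rightarrow> nat" and E :: 'a
  assumes E_idem: "E * E = E" and E_notin_Jac: "E \<notin> Jac"
    and inj_di: "inj_on di {..<N}" and di_less: "\<And>i. i < N \<Longrightarrow> di i < R"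
    and col_mult_E: "\<And>j p. col j p * E = col j p"
    and E_mult_col: "\<And>j i. i < N \<Longrightarrow> E * col j (di i) = col j (di i)"
    and corner_inverse_mod_Jac: "\<And>y. y \<in> corner_ring E \<Longrightarrow> y \<notin> Jac \<Longrightarrow>
           \<exists>y'\<in>corner_ring E. y * y' - E \<in> Jac \<and> y' * y - E \<in> Jac"
begin

abbreviation "unit \<equiv> unit_col di E"
abbreviation "basis \<equiv> basis_mod_Jac col P R N di E"
abbreviation "least_basis \<equiv> least_basis_mod_Jac col P R N di E"

lemma in_corner_iff: "x \<in> corner_ring E \<longleftrightarrow> E * x = x \<and> x * E = x"
  using in_corner_ring_iff[OF E_idem] .

lemma E_in_corner: "E \<in> corner_ring E"
  and uminus_in_corner: "x \<in> corner_ring E \<Longrightarrow> - x \<in> corner_ring E"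
  and mult_in_corner: "x \<in> corner_ring E \<Longrightarrow> y \<in> corner_ring E \<Longrightarrow> x * y \<in> corner_ring E"
  and col_in_corner: "i < N \<Longrightarrow> col j (di i) \<in> corner_ring E"
  by (auto simp: in_corner_iff E_idem algebra_simps col_mult_E E_mult_col) (metis mult.assoc)+

lemma corner_cancel_mod_Jac:
  assumes "y * E = y" "y \<notin> Jac" "c \<in> corner_ring E" "y * c \<in> Jac"
  shows "c \<in> Jac"
proof (rule ccontr)
  assume "c \<notin> Jac"
  then obtain c' where "c * c' - E \<in> Jac" using corner_inverse_mod_Jac assms(3) by blast
  then have "y * c * c' - y * (c * c' - E) \<in> Jac"
    using Jac_diff Jac_mult_right[OF assms(4)] Jac_mult_left by blast
  then show False using assms(1,2) by (simp add: algebra_simps)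
qed

lemma sum_unit_col_pivot:
  assumes "A \<subseteq> {..<N}" "i0 \<in> A"
  shows "(\<Sum>i\<in>A. unit i (di i0) * f i) = E * f i0"
proof -
  have "(\<Sum>i\<in>A. unit i (di i0) * f i) = (\<Sum>i\<in>A. if i = i0 then E * f i else 0)"
    using assms inj_di by (intro sum.cong refl) (auto simp: unit_col_def dest: inj_onD)
  then show ?thesis using assms finite_subset[OF assms(1)] by simp
qed

lemma sum_unit_col_off_pivots:
  "p \<notin> di ` A \<Longrightarrow> (\<Sum>i\<in>A. unit i p * f i) = 0"
  by (intro sum.neutral) (auto simp: unit_col_def)

lemma pivot_vec_pivot: "i0 < N \<Longrightarrow> pivot_vec di N d (di i0) = d i0"
proof -
  assume "i0 < N"
  then have "pivot_vec di N d (di i0) = (\<Sum>i<N. if i = i0 then d i else 0)"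
    unfolding pivot_vec_def using inj_di by (intro sum.cong refl) (auto dest: inj_onD)
  with \<open>i0 < N\<close> show ?thesis by simp
qed

abbreviation unit_cols :: "(nat \<Rightarrow> nat) \<Rightarrow> nat \<Rightarrow> bool" where
  "unit_cols \<pi> L \<equiv> \<forall>i<L. \<forall>p<R. col (\<pi> i) p = unit i p"

lemma sum_unit_cols:
  assumes "inj_on \<pi> I" "I \<subseteq> {..<L}" "unit_cols \<pi> L" "p < R"
  shows "(\<Sum>x\<in>\<pi> ` I. col x p * c x) = (\<Sum>i\<in>I. unit i p * c (\<pi> i))"
  using assms by (simp add: sum.reindex subset_eq)

lemma sum_in_corner:
  assumes "\<And>i. i \<in> A \<Longrightarrow> f i \<in> corner_ring E"
  shows "sum f A \<in> corner_ring E"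
proof -
  have "E * sum f A = sum f A" "sum f A * E = sum f A"
    using assms in_corner_iff by (simp_all add: sum_distrib_left sum_distrib_right)
  then show ?thesis using in_corner_iff by blast
qed

lemma unit_cols_indep:
  assumes "inj_on \<pi> {..<L}" "L \<le> N" "unit_cols \<pi> L"
  shows "indep_mod_Jac col R E (\<pi> ` {..<L})"
  unfolding indep_mod_Jac_def
proof (intro allI impI ballI)
  fix c j
  assume c: "(\<forall>j\<in>\<pi> ` {..<L}. c j \<in> corner_ring E) \<and> (\<forall>p<R. (\<Sum>j\<in>\<pi> ` {..<L}. col j p * c j) \<in> Jac)"
    and "j \<in> \<pi> ` {..<L}"
  then obtain i where i: "i < L" "j = \<pi> i" by auto
  then have "di i < R" using assms(2) di_less by simp
  moreover have "(\<Sum>j\<in>\<pi> ` {..<L}. col j (di i) * c j) = E * c (\<pi> i)"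
    using sum_unit_cols[OF assms(1) subset_refl assms(3) \<open>di i < R\<close>] sum_unit_col_pivot i assms(2)
    by simp
  ultimately have "E * c (\<pi> i) \<in> Jac" using c by metis
  then show "c j \<in> Jac" using c i in_corner_iff by auto
qed

lemma unit_cols_spans:
  assumes "inj_on \<pi> {..<N}" "unit_cols \<pi> N"
  shows "spans_mod_Jac col R N di E (\<pi> ` {..<N})"
  unfolding spans_mod_Jac_def
proof (intro allI impI)
  fix d assume d: "\<forall>i<N. d i \<in> corner_ring E"
  define c where "c = d \<circ> the_inv_into {..<N} \<pi>"
  have c: "c (\<pi> i) = d i" if "i < N" for i using that assms(1) by (simp add: c_def the_inv_into_f_f)
  have "(\<Sum>x\<in>\<pi> ` {..<N}. col x p * c x) = pivot_vec di N d p" if "p < R" for p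
  proof -
    have "(\<Sum>x\<in>\<pi> ` {..<N}. col x p * c x) = (\<Sum>i<N. unit i p * d i)"
      using sum_unit_cols[OF assms(1) subset_refl assms(2) that] c by simp
    also have "\<dots> = pivot_vec di N d p"
      unfolding pivot_vec_def using d in_corner_iff by (intro sum.cong) (auto simp: unit_col_def)
    finally show ?thesis .
  qed
  then show "\<exists>c. (\<forall>j\<in>\<pi> ` {..<N}. c j \<in> corner_ring E) \<and>
      (\<forall>p<R. (\<Sum>j\<in>\<pi> ` {..<N}. col j p * c j) - pivot_vec di N d p \<in> Jac)"
    using c d Jac_zero by (intro exI[of _ c]) auto
qed

lemma unit_cols_basis:
  assumes "inj_on \<pi> {..<N}" "\<pi> ` {..<N} \<subseteq> {..<P}" "unit_cols \<pi> N"
  shows "basis (\<pi> ` {..<N})"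
  using assms unit_cols_indep unit_cols_spans by (simp add: basis_mod_Jac_def)

lemma few_unit_cols_not_spanning:
  assumes "L < N" "inj_on \<pi> {..<L}" "unit_cols \<pi> L"
  shows "\<not> spans_mod_Jac col R N di E (\<pi> ` {..<L})"
proof
  assume spans: "spans_mod_Jac col R N di E (\<pi> ` {..<L})"
  have "(if i = L then E else 0) \<in> corner_ring E" for i
    using E_in_corner zero_in_corner_ring[of E] by simp
  then obtain c where
    c: "\<forall>p<R. (\<Sum>x\<in>\<pi> ` {..<L}. col x p * c x) - pivot_vec di N (\<lambda>i. if i = L then E else 0) p \<in> Jac"
    using spans[unfolded spans_mod_Jac_def, rule_format, of "\<lambda>i. if i = L then E else 0"] by blast
  have "di L < R" "di L \<notin> di ` {..<L}" using assms(1) di_less inj_di by (auto dest: inj_onD)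
  then have "(\<Sum>x\<in>\<pi> ` {..<L}. col x (di L) * c x) = 0"
    using sum_unit_cols[OF assms(2) subset_refl assms(3)] by (simp add: sum_unit_col_off_pivots)
  moreover have "pivot_vec di N (\<lambda>i. if i = L then E else 0) (di L) = E"
    using pivot_vec_pivot[OF assms(1), of "\<lambda>i. if i = L then E else 0"] by simp
  ultimately have "- E \<in> Jac" using c[rule_format, OF \<open>di L < R\<close>] by simp
  then show False using E_notin_Jac Jac_uminus_iff by blast
qed

lemma indep_mod_Jac_insert:
  assumes indep: "indep_mod_Jac col R E S" and "finite S" "j \<notin> S" "p < R"
    and off: "\<forall>x\<in>S. col x p \<in> Jac" and pivot: "col j p \<notin> Jac"
  shows "indep_mod_Jac col R E (insert j S)"
  unfolding indep_mod_Jac_def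
proof (intro allI impI)
  fix c
  assume c: "(\<forall>x\<in>insert j S. c x \<in> corner_ring E) \<and> (\<forall>p<R. (\<Sum>x\<in>insert j S. col x p * c x) \<in> Jac)"
  have split: "(\<Sum>x\<in>insert j S. col x p' * c x) = col j p' * c j + (\<Sum>x\<in>S. col x p' * c x)" for p'
    using assms(2,3) by simp
  have "(\<Sum>x\<in>S. col x p * c x) \<in> Jac" using off by (intro Jac_sum Jac_mult_right) auto
  then have "(\<Sum>x\<in>insert j S. col x p * c x) - (\<Sum>x\<in>S. col x p * c x) \<in> Jac"
    using c \<open>p < R\<close> Jac_diff by blast
  then have "col j p * c j \<in> Jac" using split[of p] by simp
  then have cj: "c j \<in> Jac" using corner_cancel_mod_Jac col_mult_E pivot c by blast
  have "(\<Sum>x\<in>S. col x p' * c x) \<in> Jac" if "p' < R" for p'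
  proof -
    have "(\<Sum>x\<in>insert j S. col x p' * c x) - col j p' * c j \<in> Jac"
      using c that Jac_diff Jac_mult_left[OF cj] by blast
    then show ?thesis using split[of p'] by simp
  qed
  then have "\<forall>x\<in>S. c x \<in> Jac" using indep c unfolding indep_mod_Jac_def by blast
  with cj show "\<forall>x\<in>insert j S. c x \<in> Jac" by blast
qed

lemma spans_mod_Jac_of_unit_targets:
  assumes unit_target: "\<And>i. i < N \<Longrightarrow> \<exists>c. (\<forall>x\<in>T. c x \<in> corner_ring E) \<and>
      (\<forall>p<R. (\<Sum>x\<in>T. col x p * c x) - unit i p \<in> Jac)"
  shows "spans_mod_Jac col R N di E T"
  unfolding spans_mod_Jac_def
proof (intro allI impI)
  fix d assume d: "\<forall>i<N. d i \<in> corner_ring E"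
  define C where "C i = (SOME c. (\<forall>x\<in>T. c x \<in> corner_ring E) \<and>
      (\<forall>p<R. (\<Sum>x\<in>T. col x p * c x) - unit i p \<in> Jac))" for i
  have C: "(\<forall>x\<in>T. C i x \<in> corner_ring E) \<and> (\<forall>p<R. (\<Sum>x\<in>T. col x p * C i x) - unit i p \<in> Jac)"
    if "i < N" for i
    unfolding C_def using someI_ex[OF unit_target[OF that]] .
  define c where "c x = (\<Sum>i<N. C i x * d i)" for x
  have "(\<Sum>x\<in>T. col x p * c x) - pivot_vec di N d p
      = (\<Sum>i<N. ((\<Sum>x\<in>T. col x p * C i x) - unit i p) * d i)" for p
  proof -
    have "(\<Sum>x\<in>T. col x p * c x) = (\<Sum>x\<in>T. \<Sum>i<N. col x p * C i x * d i)"
      unfolding c_def by (simp add: sum_distrib_left mult.assoc)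
    also have "\<dots> = (\<Sum>i<N. (\<Sum>x\<in>T. col x p * C i x) * d i)"
      by (subst sum.swap) (simp add: sum_distrib_right)
    finally have "(\<Sum>x\<in>T. col x p * c x) = (\<Sum>i<N. (\<Sum>x\<in>T. col x p * C i x) * d i)" .
    moreover have "pivot_vec di N d p = (\<Sum>i<N. unit i p * d i)"
      unfolding pivot_vec_def unit_col_def using d in_corner_iff by (intro sum.cong) auto
    ultimately show ?thesis by (simp add: sum_subtractf left_diff_distrib)
  qed
  then have "(\<Sum>x\<in>T. col x p * c x) - pivot_vec di N d p \<in> Jac" if "p < R" for p
    using C that by (auto intro!: Jac_sum Jac_mult_right)
  moreover have "c x \<in> corner_ring E" if "x \<in> T" for x
    unfolding c_def using C d that by (intro sum_in_corner mult_in_corner) auto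
  ultimately show "\<exists>c. (\<forall>j\<in>T. c j \<in> corner_ring E) \<and>
      (\<forall>p<R. (\<Sum>j\<in>T. col j p * c j) - pivot_vec di N d p \<in> Jac)"
    by blast
qed

lemma dependent_col_not_indep:
  assumes indep: "indep_mod_Jac col R E T" and "finite T"
    and "inj_on \<pi> {..<t}" "t \<le> N" "unit_cols \<pi> t" "\<pi> ` {..<t} \<subseteq> T" "a \<in> T" "a \<notin> \<pi> ` {..<t}"
    and dep: "\<And>p. p < R \<Longrightarrow> p \<notin> di ` {..<t} \<Longrightarrow> col a p \<in> Jac"
  shows False
proof -
  define c where "c x = (if x = a then E else if x \<in> \<pi> ` {..<t}
      then - col a (di (the_inv_into {..<t} \<pi> x)) else 0)" for x
  have c_pi: "c (\<pi> i) = - col a (di i)" if "i < t" for i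
    using assms(3,8) that by (auto simp: c_def the_inv_into_f_f)
  have sum_T: "(\<Sum>x\<in>T. col x p * c x) = col a p + (\<Sum>i<t. unit i p * - col a (di i))"
    if "p < R" for p
  proof -
    have "(\<Sum>x\<in>T. col x p * c x) = (\<Sum>x\<in>insert a (\<pi> ` {..<t}). col x p * c x)"
      using assms(2,6,7) by (intro sum.mono_neutral_right) (auto simp: c_def)
    also have "\<dots> = col a p * E + (\<Sum>x\<in>\<pi> ` {..<t}. col x p * c x)"
      using assms(8) by (simp add: c_def)
    also have "(\<Sum>x\<in>\<pi> ` {..<t}. col x p * c x) = (\<Sum>i<t. unit i p * - col a (di i))"
      using sum_unit_cols[OF assms(3) subset_refl assms(5) that] c_pi by simp
    finally show ?thesis using col_mult_E by simp
  qed
  have "(\<Sum>x\<in>T. col x p * c x) \<in> Jac" if "p < R" for p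
  proof (cases "p \<in> di ` {..<t}")
    case True
    then obtain i where i: "i < t" "p = di i" by auto
    then have "(\<Sum>i<t. unit i p * - col a (di i)) = - col a p"
      using sum_unit_col_pivot[of "{..<t}" i "\<lambda>i. - col a (di i)"] E_mult_col assms(4) by simp
    then show ?thesis using sum_T[OF that] Jac_zero by simp
  next
    case False
    then have "(\<Sum>i<t. unit i p * - col a (di i)) = 0" by (rule sum_unit_col_off_pivots)
    then show ?thesis using sum_T[OF that] dep[OF that False] by simp
  qed
  moreover have "c x \<in> corner_ring E" for x
  proof (cases "x \<in> \<pi> ` {..<t} \<and> x \<noteq> a")
    case True
    then obtain i where "i < t" "x = \<pi> i" by auto
    then show ?thesis using c_pi assms(4) col_in_corner uminus_in_corner by simp
  qed (auto simp: c_def E_in_corner zero_in_corner_ring)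
  ultimately have "c a \<in> Jac" using indep assms(7) unfolding indep_mod_Jac_def by blast
  then show False using E_notin_Jac by (simp add: c_def)
qed


section \<open>Least bases are reduced echelon forms\<close>

lemma least_basis_lex_minimal:
  "least_basis S \<Longrightarrow> basis T \<Longrightarrow> \<not> ord_class.lexordp (sorted_list_of_set T) (sorted_list_of_set S)"
  unfolding least_basis_mod_Jac_def by (metis lexordp_irreflexive' lexordp_trans)

lemma least_basis_length:
  assumes least: "least_basis S" and units: "unit_cols ((!) (sorted_list_of_set S)) N"
  shows "length (sorted_list_of_set S) = N"
proof -
  let ?js = "sorted_list_of_set S"
  have basis: "basis S" using least by (simp add: least_basis_mod_Jac_def)
  then have "finite S" by (meson basis_mod_Jac_def finite_lessThan finite_subset)
  then have S: "S = (!) ?js ` {..<length ?js}" using image_nth_sorted_list_of_set by metis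
  have inj: "inj_on ((!) ?js) {..<length ?js}"
    using strict_mono_on_nth_sorted_list_of_set strict_mono_on_imp_inj_on by blast
  consider "length ?js < N" | "N < length ?js" | "length ?js = N" by linarith
  then show ?thesis
  proof cases
    case 1
    then have "\<not> spans_mod_Jac col R N di E S"
      using few_unit_cols_not_spanning[OF 1 inj] units S by (metis less_trans)
    then show ?thesis using basis by (simp add: basis_mod_Jac_def)
  next
    case 2
    let ?S' = "(!) ?js ` {..<N}"
    have "?S' \<subseteq> S" using 2 S by auto
    then have "basis ?S'"
      using basis 2 units inj by (intro unit_cols_basis) (auto simp: basis_mod_Jac_def inj_on_subset)
    moreover have "sorted_list_of_set ?S' = take N ?js"
    proof -
      have "strict_mono_on {..<N} ((!) ?js)"
        by (rule monotone_on_subset[OF strict_mono_on_nth_sorted_list_of_set]) (use 2 in auto)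
      then have "sorted_list_of_set ?S' = map ((!) ?js) [0..<N]"
        by (rule sorted_list_of_set_image_strict_mono)
      also have "\<dots> = take N ?js" using 2 by (intro nth_equalityI) auto
      finally show ?thesis .
    qed
    moreover have "ord_class.lexordp (take N ?js) ?js"
      using lexordp_append_rightI[of "drop N ?js" "take N ?js"] 2 by simp
    ultimately show ?thesis using least_basis_lex_minimal[OF least] by metis
  qed
qed

text \<open>If \<open>col j p\<close> were not in the radical, adjoining column \<open>j\<close> would give a
  lexicographically smaller basis.\<close>
lemma least_basis_col_off_pivot_rows:
  assumes least: "least_basis (\<pi> ` {..<N})" and units: "unit_cols \<pi> N"
    and "j < P" "j \<notin> \<pi> ` {..<N}" "t < N" "j < \<pi> t" "p < R" "p \<notin> di ` {..<N}"
  shows "col j p \<in> Jac"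
proof (rule ccontr)
  assume pivot: "col j p \<notin> Jac"
  let ?S = "\<pi> ` {..<N}"
  have basis: "basis ?S" using least by (simp add: least_basis_mod_Jac_def)
  have off: "\<forall>x\<in>?S. col x p \<in> Jac" using units assms(7,8) Jac_zero by (auto simp: unit_col_def)
  have "indep_mod_Jac col R E ?S" using basis by (simp add: basis_mod_Jac_def)
  then have indep: "indep_mod_Jac col R E (insert j ?S)"
    using indep_mod_Jac_insert[OF _ finite_imageI[OF finite_lessThan] assms(4,7) off pivot] by blast
  have "spans_mod_Jac col R N di E ?S" using basis by (simp add: basis_mod_Jac_def)
  then have spans: "spans_mod_Jac col R N di E (insert j ?S)" by (rule spans_mod_Jac_mono) auto
  have "basis (insert j ?S)" using indep spans basis \<open>j < P\<close> by (simp add: basis_mod_Jac_def)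
  moreover have "ord_class.lexordp (sorted_list_of_set (insert j ?S)) (sorted_list_of_set ?S)"
    by (rule lexordp_sorted_list_of_set_agree_below[where b = "\<pi> t"]) (use assms(4-6) in auto)
  ultimately show False using least_basis_lex_minimal[OF least] by blast
qed

lemma exchange_unit_target:
  assumes inj: "inj_on \<pi> {..<N}" and units: "unit_cols \<pi> N" and "i0 < N" "j \<notin> \<pi> ` {..<N}"
    and y': "col j (di i0) * y' - E \<in> Jac"
    and off: "\<And>p. p < R \<Longrightarrow> p \<notin> di ` {..<N} \<Longrightarrow> col j p \<in> Jac"
    and c: "\<And>i. i \<in> {..<N} - {i0} \<Longrightarrow> c (\<pi> i) = - col j (di i) * y'" "c j = y'" and "p < R"
  shows "(\<Sum>x\<in>insert j (\<pi> ` ({..<N} - {i0})). col x p * c x) - unit i0 p \<in> Jac"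
proof -
  let ?I = "{..<N} - {i0}"
  have "j \<notin> \<pi> ` ?I" using assms(4) by auto
  then have "(\<Sum>x\<in>insert j (\<pi> ` ?I). col x p * c x) = col j p * y' + (\<Sum>x\<in>\<pi> ` ?I. col x p * c x)"
    by (simp add: c(2))
  also have "(\<Sum>x\<in>\<pi> ` ?I. col x p * c x) = (\<Sum>i\<in>?I. unit i p * c (\<pi> i))"
    using sum_unit_cols[OF inj_on_subset[OF inj] _ units \<open>p < R\<close>] by auto
  also have "\<dots> = - (\<Sum>i\<in>?I. unit i p * col j (di i)) * y'"
    using c(1) by (simp add: sum_distrib_right sum_negf mult.assoc)
  finally have sum: "(\<Sum>x\<in>insert j (\<pi> ` ?I). col x p * c x)
      = col j p * y' - (\<Sum>i\<in>?I. unit i p * col j (di i)) * y'" by simp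
  consider (pivot) "p = di i0" | (other) i1 where "i1 \<in> ?I" "p = di i1" | (outside) "p \<notin> di ` {..<N}"
    by blast
  then show ?thesis
  proof cases
    case pivot
    then have "(\<Sum>i\<in>?I. unit i p * col j (di i)) = 0"
      using inj_di \<open>i0 < N\<close> by (intro sum_unit_col_off_pivots) (auto dest: inj_onD)
    then show ?thesis using sum y' pivot by (simp add: unit_col_def)
  next
    case (other i1)
    then have "(\<Sum>i\<in>?I. unit i p * col j (di i)) = col j p"
      using sum_unit_col_pivot[of ?I i1] E_mult_col by simp
    moreover have "unit i0 p = 0" using other inj_di \<open>i0 < N\<close> by (auto simp: unit_col_def dest: inj_onD)
    ultimately show ?thesis using sum Jac_zero by simp
  next
    case outside
    then have "(\<Sum>i\<in>?I. unit i p * col j (di i)) = 0" by (intro sum_unit_col_off_pivots) auto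
    moreover have "unit i0 p = 0" using outside \<open>i0 < N\<close> by (auto simp: unit_col_def)
    ultimately show ?thesis using sum Jac_mult_right[OF off[OF \<open>p < R\<close> outside]] by simp
  qed
qed

lemma spans_mod_Jac_exchange:
  assumes inj: "inj_on \<pi> {..<N}" and units: "unit_cols \<pi> N" and "i0 < N" "j \<notin> \<pi> ` {..<N}"
    and y': "y' \<in> corner_ring E" "col j (di i0) * y' - E \<in> Jac"
    and off: "\<And>p. p < R \<Longrightarrow> p \<notin> di ` {..<N} \<Longrightarrow> col j p \<in> Jac"
  shows "spans_mod_Jac col R N di E (insert j (\<pi> ` ({..<N} - {i0})))" (is "spans_mod_Jac _ _ _ _ _ ?T")
proof (rule spans_mod_Jac_of_unit_targets)
  fix i assume "i < N"
  show "\<exists>c. (\<forall>x\<in>?T. c x \<in> corner_ring E) \<and> (\<forall>p<R. (\<Sum>x\<in>?T. col x p * c x) - unit i p \<in> Jac)"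
  proof (cases "i = i0")
    case False
    let ?c = "\<lambda>x. if x = \<pi> i then E else 0"
    have "\<pi> i \<in> ?T" using False \<open>i < N\<close> by auto
    then have "(\<Sum>x\<in>?T. col x p * ?c x) = unit i p" if "p < R" for p
      using units \<open>i < N\<close> that by (simp add: if_distrib[of "(*) _"] unit_col_def E_idem cong: if_cong)
    then show ?thesis using E_in_corner zero_in_corner_ring[of E] Jac_zero by (intro exI[of _ ?c]) auto
  next
    case True
    define c where "c x = (if x = j then y' else - col j (di (the_inv_into {..<N} \<pi> x)) * y')" for x
    have c_pi: "c (\<pi> i) = - col j (di i) * y'" if "i \<in> {..<N} - {i0}" for i
      using that assms(4) by (auto simp: c_def the_inv_into_f_f[OF inj])
    have "c x \<in> corner_ring E" if x: "x \<in> ?T" for x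
    proof (cases "x = j")
      case False
      then obtain i where "i \<in> {..<N} - {i0}" "x = \<pi> i" using x by auto
      then show ?thesis using c_pi y'(1) by (auto intro!: mult_in_corner uminus_in_corner col_in_corner)
    qed (simp add: c_def y'(1))
    moreover have "(\<Sum>x\<in>?T. col x p * c x) - unit i0 p \<in> Jac" if "p < R" for p
      using exchange_unit_target[OF inj units assms(3,4) y'(2) off c_pi _ that] by (simp add: c_def)
    ultimately show ?thesis unfolding True by blast
  qed
qed

lemma least_basis_echelon:
  assumes least: "least_basis (\<pi> ` {..<N})" and mono: "strict_mono_on {..<N} \<pi>"
    and units: "unit_cols \<pi> N"
  shows "echelon_mod_Jac col P R N di \<pi>"
  unfolding echelon_mod_Jac_def
proof (intro allI impI)
  fix j t p
  assume j: "j < P" "j \<notin> \<pi> ` {..<N}" and t: "t < N" "j < \<pi> t" and p: "p < R" "p \<notin> di ` {..<t}"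
  have off: "col j p' \<in> Jac" if "p' < R" "p' \<notin> di ` {..<N}" for p'
    using least_basis_col_off_pivot_rows[OF least units j t that] .
  show "col j p \<in> Jac"
  proof (cases "p \<in> di ` {..<N}")
    case True
    then obtain i0 where i0: "i0 < N" "p = di i0" by auto
    have "t \<le> i0" using p(2) i0 by (auto simp: not_less[symmetric])
    txt \<open>Otherwise column \<open>j\<close> can replace the pivot column \<open>\<pi> i0\<close>, which lies to its
      right, and the result is a lexicographically smaller basis.\<close>
    show ?thesis
    proof (rule ccontr)
      assume y: "col j p \<notin> Jac"
      let ?T = "insert j (\<pi> ` ({..<N} - {i0}))"
      have inj: "inj_on \<pi> {..<N}" using mono strict_mono_on_imp_inj_on by blast
      have basis: "basis (\<pi> ` {..<N})" using least by (simp add: least_basis_mod_Jac_def)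
      then have "indep_mod_Jac col R E (\<pi> ` {..<N})" by (simp add: basis_mod_Jac_def)
      then have "indep_mod_Jac col R E (\<pi> ` ({..<N} - {i0}))" by (rule indep_mod_Jac_subset) auto
      moreover have "\<forall>x\<in>\<pi> ` ({..<N} - {i0}). col x p \<in> Jac"
        using units i0 inj_di p(1) Jac_zero by (auto simp: unit_col_def dest: inj_onD)
      ultimately have indep: "indep_mod_Jac col R E ?T"
        using indep_mod_Jac_insert[OF _ _ _ p(1) _ y] j(2) by auto
      obtain y' where y': "y' \<in> corner_ring E" "col j (di i0) * y' - E \<in> Jac"
        using corner_inverse_mod_Jac[OF col_in_corner[OF i0(1)]] y i0(2) by blast
      have "basis ?T"
        using indep spans_mod_Jac_exchange[OF inj units i0(1) j(2) y' off] j(1) basis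
        by (auto simp: basis_mod_Jac_def)
      moreover have "\<pi> t \<le> \<pi> i0" using strict_mono_on_leD[OF mono] t(1) i0(1) \<open>t \<le> i0\<close> by simp
      then have "ord_class.lexordp (sorted_list_of_set ?T) (sorted_list_of_set (\<pi> ` {..<N}))"
        using j(2) t by (intro lexordp_sorted_list_of_set_agree_below[where b = "\<pi> t"]) auto
      ultimately show False using least_basis_lex_minimal[OF least] by blast
    qed
  qed (use off p in blast)
qed

lemma echelon_no_lex_smaller_basis:
  assumes mono: "strict_mono_on {..<N} \<pi>" and units: "unit_cols \<pi> N"
    and echelon: "echelon_mod_Jac col P R N di \<pi>" and T: "basis T"
  shows "\<not> ord_class.lexordp (sorted_list_of_set T) (map \<pi> [0..<N])"
proof
  assume lex: "ord_class.lexordp (sorted_list_of_set T) (map \<pi> [0..<N])"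
  have inj: "inj_on \<pi> {..<L}" if "L \<le> N" for L
    using inj_on_subset[OF strict_mono_on_imp_inj_on[OF mono]] that by auto
  have fin: "finite T" and "T \<subseteq> {..<P}" using T finite_subset by (auto simp: basis_mod_Jac_def)
  then have T_set: "set (sorted_list_of_set T) = T" by simp
  from lex show False
  proof (cases rule: lexordp_map_upt_cases)
    case (prefix L)
    then have "T = \<pi> ` {..<L}" using T_set by (metis atLeast0LessThan set_map set_upt)
    then show False
      using T few_unit_cols_not_spanning[OF prefix(1) inj] units prefix(1) by (auto simp: basis_mod_Jac_def)
  next
    case (differ t a vs)
    have "sorted_wrt (<) (map \<pi> [0..<t] @ a # vs)"
      using differ(3) strict_sorted_list_of_set[of T] by metis
    then have below: "\<pi> i < a" if "i < t" for i using that by (auto simp: sorted_wrt_append)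
    have "a \<notin> \<pi> ` {..<N}"
    proof
      assume "a \<in> \<pi> ` {..<N}"
      then obtain i where "i < N" "a = \<pi> i" by auto
      then show False using below[of i] strict_mono_on_leD[OF mono, of t i] differ(1,2) by force
    qed
    moreover have "a \<in> T" "\<pi> ` {..<t} \<subseteq> T" using T_set differ(3) by auto
    ultimately have "a < P" "a \<notin> \<pi> ` {..<t}" using \<open>T \<subseteq> {..<P}\<close> differ(1) by auto
    have dep: "col a p \<in> Jac" if "p < R" "p \<notin> di ` {..<t}" for p
      using echelon[unfolded echelon_mod_Jac_def, rule_format, OF \<open>a < P\<close> \<open>a \<notin> \<pi> ` {..<N}\<close> differ(1,2) that] .
    have "indep_mod_Jac col R E T" using T by (simp add: basis_mod_Jac_def)
    moreover have "unit_cols \<pi> t" using units differ(1) by simp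
    ultimately show False
      using dependent_col_not_indep[OF _ fin inj[of t] _ _ _ \<open>a \<in> T\<close> _ dep]
        \<open>\<pi> ` {..<t} \<subseteq> T\<close> \<open>a \<notin> \<pi> ` {..<t}\<close> differ(1) by simp
  qed
qed

lemma echelon_least_basis:
  assumes mono: "strict_mono_on {..<N} \<pi>" and "\<pi> ` {..<N} \<subseteq> {..<P}" and units: "unit_cols \<pi> N"
    and echelon: "echelon_mod_Jac col P R N di \<pi>"
  shows "least_basis (\<pi> ` {..<N})"
proof -
  let ?S = "\<pi> ` {..<N}"
  have sorted_S: "sorted_list_of_set ?S = map \<pi> [0..<N]"
    using mono by (rule sorted_list_of_set_image_strict_mono)
  have "basis ?S"
    using strict_mono_on_imp_inj_on[OF mono] assms(2) units by (intro unit_cols_basis) auto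
  moreover have "?S = T \<or> ord_class.lexordp (sorted_list_of_set ?S) (sorted_list_of_set T)"
    if T: "basis T" for T
  proof -
    have "finite T" using T finite_subset by (auto simp: basis_mod_Jac_def)
    consider "ord_class.lexordp (sorted_list_of_set T) (map \<pi> [0..<N])"
      | "sorted_list_of_set T = sorted_list_of_set ?S"
      | "ord_class.lexordp (sorted_list_of_set ?S) (sorted_list_of_set T)"
      using lexordp_linear sorted_S by metis
    then show ?thesis
    proof cases
      case 2
      then show ?thesis using sorted_list_of_set_inject \<open>finite T\<close> by blast
    qed (use echelon_no_lex_smaller_basis[OF mono units echelon T] in auto)
  qed
  ultimately show ?thesis by (simp add: least_basis_mod_Jac_def)
qed

lemma echelon_mod_Jac_left_of_pivot:
  assumes mono: "strict_mono_on {..<N} \<pi>" and units: "unit_cols \<pi> N"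
    and echelon: "echelon_mod_Jac col P R N di \<pi>"
    and "j < P" "t < N" "j < \<pi> t" "p < R" "p \<notin> di ` {..<t}"
  shows "col j p \<in> Jac"
proof (cases "j \<in> \<pi> ` {..<N}")
  case True
  then obtain i where i: "i < N" "j = \<pi> i" by auto
  then have "i < t" using assms(6) strict_mono_on_leD[OF mono, of t i] assms(5) by (cases "i < t") auto
  then show ?thesis using units i assms(7,8) Jac_zero by (auto simp: unit_col_def)
qed (use echelon assms(4-8) in \<open>auto simp: echelon_mod_Jac_def\<close>)

lemma least_basis_nth_echelon:
  assumes least: "least_basis S" and units: "unit_cols ((!) (sorted_list_of_set S)) N"
  shows "S = (!) (sorted_list_of_set S) ` {..<N}" "strict_mono_on {..<N} ((!) (sorted_list_of_set S))"
    "echelon_mod_Jac col P R N di ((!) (sorted_list_of_set S))"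
proof -
  have len: "length (sorted_list_of_set S) = N" using least_basis_length[OF least units] .
  have "finite S" using least finite_subset by (auto simp: least_basis_mod_Jac_def basis_mod_Jac_def)
  then show S: "S = (!) (sorted_list_of_set S) ` {..<N}" using image_nth_sorted_list_of_set len by metis
  show mono: "strict_mono_on {..<N} ((!) (sorted_list_of_set S))"
    using strict_mono_on_nth_sorted_list_of_set len by metis
  show "echelon_mod_Jac col P R N di ((!) (sorted_list_of_set S))"
    using least_basis_echelon[OF _ mono units] least S by simp
qed

end

section \<open>Products of matrices in echelon form\<close>

lemma col_comp_pivot:
  assumes C1: "corner_columns col1 R1 N1 di E" and C2: "corner_columns col2 R2 N2 di E"
    and colG: "\<And>j p. colG j p = (\<Sum>r<R1. A p r * col1 j r)"
    and col2: "\<And>a p. a < N1 \<Longrightarrow> col2 a p = A p (di a)"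
    and units1: "\<forall>i<N1. \<forall>r<R1. col1 (\<pi>1 i) r = unit_col di E i r" and "a < N1"
  shows "colG (\<pi>1 a) p = col2 a p"
proof -
  have "colG (\<pi>1 a) p = (\<Sum>r<R1. A p r * (if r = di a then E else 0))"
    unfolding colG using units1 \<open>a < N1\<close> by (intro sum.cong) (auto simp: unit_col_def)
  also have "\<dots> = col2 a p * E"
    using \<open>a < N1\<close> corner_columns.di_less[OF C1] col2 by (simp add: if_distrib[of "(*) _"] cong: if_cong)
  finally show ?thesis using corner_columns.col_mult_E[OF C2] by simp
qed

lemma echelon_comp:
  assumes C1: "corner_columns col1 R1 N1 di E" and C2: "corner_columns col2 R2 N2 di E"
    and colG: "\<And>j p. colG j p = (\<Sum>r<R1. A p r * col1 j r)"
    and col2: "\<And>a p. a < N1 \<Longrightarrow> col2 a p = A p (di a)"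
    and mono1: "strict_mono_on {..<N1} \<pi>1" and units1: "\<forall>i<N1. \<forall>r<R1. col1 (\<pi>1 i) r = unit_col di E i r"
    and ech1: "echelon_mod_Jac col1 P R1 N1 di \<pi>1"
    and mono2: "strict_mono_on {..<N2} \<pi>2" and range2: "\<pi>2 ` {..<N2} \<subseteq> {..<N1}"
    and units2: "\<forall>i<N2. \<forall>p<R2. col2 (\<pi>2 i) p = unit_col di E i p"
    and ech2: "echelon_mod_Jac col2 N1 R2 N2 di \<pi>2"
  shows "echelon_mod_Jac colG P R2 N2 di (\<pi>1 \<circ> \<pi>2)"
  unfolding echelon_mod_Jac_def
proof (intro allI impI)
  fix j t p
  assume j: "j < P" "j \<notin> (\<pi>1 \<circ> \<pi>2) ` {..<N2}" and t: "t < N2" "j < (\<pi>1 \<circ> \<pi>2) t"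
    and p: "p < R2" "p \<notin> di ` {..<t}"
  have t1: "\<pi>2 t < N1" using range2 t(1) by auto
  have col2_Jac: "col2 a p \<in> Jac" if "a < N1" "a < \<pi>2 t" for a
    using corner_columns.echelon_mod_Jac_left_of_pivot[OF C2 mono2 units2 ech2 that(1) t(1) that(2) p] .
  show "colG j p \<in> Jac"
  proof (cases "j \<in> \<pi>1 ` {..<N1}")
    case True
    then obtain a where a: "a < N1" "j = \<pi>1 a" by auto
    then have "a < \<pi>2 t" using t(2) strict_mono_on_leD[OF mono1, of "\<pi>2 t" a] t1 by (cases "a < \<pi>2 t") auto
    then show ?thesis using col_comp_pivot[OF C1 C2 colG col2 units1 a(1)] col2_Jac a by simp
  next
    case False
    txt \<open>Column \<open>j\<close> of the product is \<open>A\<close> applied to column \<open>j\<close> of the first matrix,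
      which vanishes modulo the radical outside the rows \<open>di a\<close> with \<open>a < \<pi>2 t\<close>; there
      \<open>A\<close> is a column of the second matrix left of its pivot \<open>t\<close>.\<close>
    have "A p r * col1 j r \<in> Jac" if "r < R1" for r
    proof (cases "r \<in> di ` {..<\<pi>2 t}")
      case True
      then obtain a where "a < \<pi>2 t" "r = di a" by auto
      then show ?thesis using col2_Jac[of a] col2[of a p] t1 Jac_mult_right by simp
    next
      case False
      then have "col1 j r \<in> Jac"
        using ech1 j(1) \<open>j \<notin> \<pi>1 ` {..<N1}\<close> t1 t(2) that by (simp add: echelon_mod_Jac_def)
      then show ?thesis by (rule Jac_mult_left)
    qed
    then show ?thesis unfolding colG by (intro Jac_sum) simp
  qed
qed

lemma least_basis_comp:
  assumes C1: "corner_columns col1 R1 N1 di E" and C2: "corner_columns col2 R2 N2 di E"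
    and CG: "corner_columns colG R2 N2 di E"
    and colG: "\<And>j p. colG j p = (\<Sum>r<R1. A p r * col1 j r)"
    and col2: "\<And>a p. a < N1 \<Longrightarrow> col2 a p = A p (di a)"
    and S1: "least_basis_mod_Jac col1 P R1 N1 di E S1"
      "\<forall>i<N1. \<forall>r<R1. col1 (sorted_list_of_set S1 ! i) r = unit_col di E i r"
    and S2: "least_basis_mod_Jac col2 N1 R2 N2 di E S2"
      "\<forall>i<N2. \<forall>p<R2. col2 (sorted_list_of_set S2 ! i) p = unit_col di E i p"
  shows "\<exists>S. least_basis_mod_Jac colG P R2 N2 di E S \<and>
    (\<forall>i<N2. \<forall>p<R2. colG (sorted_list_of_set S ! i) p = unit_col di E i p)"
proof -
  define \<pi>1 where "\<pi>1 = (!) (sorted_list_of_set S1)"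
  define \<pi>2 where "\<pi>2 = (!) (sorted_list_of_set S2)"
  note piv1 = corner_columns.least_basis_nth_echelon[OF C1 S1, folded \<pi>1_def]
  note piv2 = corner_columns.least_basis_nth_echelon[OF C2 S2, folded \<pi>2_def]
  have range1: "\<pi>1 ` {..<N1} \<subseteq> {..<P}" and range2: "\<pi>2 ` {..<N2} \<subseteq> {..<N1}"
    using S1(1) S2(1) piv1(1) piv2(1) by (auto simp: least_basis_mod_Jac_def basis_mod_Jac_def)
  have mono: "strict_mono_on {..<N2} (\<pi>1 \<circ> \<pi>2)"
    using range2 strict_mono_onD[OF piv1(2)] strict_mono_onD[OF piv2(2)]
    by (intro strict_mono_onI) auto
  have units: "\<forall>i<N2. \<forall>p<R2. colG ((\<pi>1 \<circ> \<pi>2) i) p = unit_col di E i p"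
    using col_comp_pivot[OF C1 C2 colG col2] S1(2) S2(2) range2 by (auto simp: \<pi>1_def \<pi>2_def)
  have "(\<pi>1 \<circ> \<pi>2) ` {..<N2} \<subseteq> {..<P}" using range1 range2 by auto
  then have "least_basis_mod_Jac colG P R2 N2 di E ((\<pi>1 \<circ> \<pi>2) ` {..<N2})"
    using corner_columns.echelon_least_basis[OF CG mono _ units
        echelon_comp[OF C1 C2 colG col2 piv1(2) S1(2)[folded \<pi>1_def] piv1(3)
          piv2(2) range2 S2(2)[folded \<pi>2_def] piv2(3)]] by blast
  moreover have "sorted_list_of_set ((\<pi>1 \<circ> \<pi>2) ` {..<N2}) ! i = (\<pi>1 \<circ> \<pi>2) i" if "i < N2" for i
    using sorted_list_of_set_image_strict_mono[OF mono] that by simp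
  ultimately show ?thesis using units by (intro exI[of _ "(\<pi>1 \<circ> \<pi>2) ` {..<N2}"]) simp
qed

section \<open>The Artin--Wedderburn embedding\<close>

lemma sum_lessThan_add: "(\<Sum>a<A + (B::nat). g a) = (\<Sum>a<A. g a) + (\<Sum>i<B. g (A + i))"
  by (induct B) (auto simp: add.assoc)

lemma blk_off_Suc: "blk_off mu (Suc h) = blk_off mu h + mu h"
  by (simp add: blk_off_def)

lemma blk_off_mono: "h \<le> h' \<Longrightarrow> blk_off mu h \<le> blk_off mu h'"
  unfolding blk_off_def by (rule sum_mono2) auto

lemma blk_off_add_inj:
  assumes "i < mu h" "i' < mu h'"
  shows "blk_off mu h + i = blk_off mu h' + i' \<longleftrightarrow> h = h' \<and> i = i'"
proof -
  have no_lower: False if "h < h'" "i < mu h" "blk_off mu h + i = blk_off mu h' + i'" for h h' i i'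
  proof -
    have "blk_off mu h + i < blk_off mu (Suc h)" using that by (simp add: blk_off_Suc)
    also have "\<dots> \<le> blk_off mu h'" using that by (intro blk_off_mono) simp
    finally show False using that by simp
  qed
  show ?thesis
  proof
    assume eq: "blk_off mu h + i = blk_off mu h' + i'"
    then have "h = h'"
      using assms no_lower by (cases h h' rule: linorder_cases) (blast, blast, metis)
    then show "h = h' \<and> i = i'" using eq by simp
  qed simp
qed

lemma blk_off_decomp: "a < blk_off mu Q \<Longrightarrow> \<exists>h<Q. \<exists>i<mu h. a = blk_off mu h + i"
proof (induct Q)
  case (Suc Q)
  show ?case
  proof (cases "a < blk_off mu Q")
    case False
    then have "a - blk_off mu Q < mu Q" "a = blk_off mu Q + (a - blk_off mu Q)"
      using Suc(2) by (auto simp: blk_off_Suc)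
    then show ?thesis by blast
  qed (use Suc in \<open>meson less_Suc_eq\<close>)
qed (simp add: blk_off_def)

lemma sum_blk_off: "(\<Sum>a<blk_off mu Q. g a) = (\<Sum>h<Q. \<Sum>i<mu h. g (blk_off mu h + i))"
  by (induct Q) (simp_all add: blk_off_Suc sum_lessThan_add blk_off_def)

lemma sum_lessThan_mult: "(\<Sum>r<M * n. g r) = (\<Sum>a<n. \<Sum>c<M. g (a * M + c))" for M :: nat
proof -
  have "(\<Sum>r<M * n. g r) = (\<Sum>a<n. \<Sum>r\<in>{a * M..<a * M + M}. g r)"
    using sum.nat_group[of g M n] by (simp add: mult.commute)
  also have "\<dots> = (\<Sum>a<n. \<Sum>c<M. g (a * M + c))"
    by (simp add: sum.atLeastLessThan_shift_0[of g] atLeast0LessThan comp_def)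
  finally show ?thesis .
qed

lemma AW_phi_eval:
  assumes "h < q" "i < mu h" "k < q" "j < mu k"
  shows "AW_phi q mu u v x (blk_off mu h + i) (blk_off mu k + j) = u h i * x * v k j"
proof -
  have "AW_phi q mu u v x (blk_off mu h + i) (blk_off mu k + j) =
    (\<Sum>h'<q. \<Sum>i'<mu h'. \<Sum>k'<q. \<Sum>j'<mu k'.
      if h' = h then (if i' = i then (if k' = k then (if j' = j then u h' i' * x * v k' j'
        else 0) else 0) else 0) else 0)"
    unfolding AW_phi_def using assms by (intro sum.cong refl) (auto simp: blk_off_add_inj)
  also have "\<dots> = u h i * x * v k j"
  proof -
    have if_const: "(\<Sum>x\<in>A. if P then f x else 0) = (if P then sum f A else 0)" for A P and f :: "nat \<Rightarrow> 'a"
      by simp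
    show ?thesis using assms by (simp add: if_const cong: if_cong)
  qed
  finally show ?thesis .
qed

lemma lin_surj_comp:
  assumes "lin_surj m n H1" "lin_surj n l H2"
  shows "lin_surj m l (mat_comp n H2 H1)"
  unfolding lin_surj_def
proof
  fix y :: "nat \<Rightarrow> 'a"
  obtain x2 where x2: "\<forall>c<l. (\<Sum>a<n. H2 c a * x2 a) = y c" using assms(2) unfolding lin_surj_def by blast
  obtain x1 where x1: "\<forall>a<n. (\<Sum>b<m. H1 a b * x1 b) = x2 a" using assms(1) unfolding lin_surj_def by blast
  have "(\<Sum>b<m. mat_comp n H2 H1 c b * x1 b) = (\<Sum>a<n. H2 c a * (\<Sum>b<m. H1 a b * x1 b))" for c
    by (simp add: mat_comp_def sum_distrib_left sum_distrib_right mult.assoc) (rule sum.swap)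
  then show "\<exists>x. \<forall>c<l. (\<Sum>b<m. mat_comp n H2 H1 c b * x b) = y c"
    using x1 x2 by (intro exI[of _ x1]) simp
qed

locale artin_wedderburn =
  fixes q :: nat and mu :: "nat \<Rightarrow> nat" and e u v :: "nat \<Rightarrow> nat \<Rightarrow> 'a::ring_1"
  assumes AW: "AW_setup q mu e u v"
begin

abbreviation "M \<equiv> mu_total q mu"

text \<open>\<open>phi_col H k j p\<close> is the entry in row \<open>p\<close> of \<open>\<Phi>(H)\<close> applied to the
  distinguished basis vector \<open>v(k)_j\<close>.\<close>
abbreviation phi_col :: "(nat \<Rightarrow> nat \<Rightarrow> 'a) \<Rightarrow> nat \<Rightarrow> nat \<Rightarrow> nat \<Rightarrow> 'a" where
  "phi_col H k \<equiv> \<lambda>j p. AW_phi_mat q mu u v H p (dist_idx q mu k j)"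

lemma mu_pos: "k < q \<Longrightarrow> 0 < mu k"
  and e_idem: "k < q \<Longrightarrow> i < mu k \<Longrightarrow> e k i * e k i = e k i"
  and e_sum: "(\<Sum>k<q. \<Sum>i<mu k. e k i) = 1"
  and u_v: "h < q \<Longrightarrow> i < mu h \<Longrightarrow> u h i = e h 0 * u h i * e h i \<and> v h i = e h i * v h i * e h 0
      \<and> u h i * v h i = e h 0 \<and> v h i * u h i = e h i"
  using AW by (simp_all add: AW_setup_def)

lemma e_mult_u: "h < q \<Longrightarrow> i < mu h \<Longrightarrow> e h 0 * u h i = u h i"
  and v_mult_e: "h < q \<Longrightarrow> i < mu h \<Longrightarrow> v h i * e h 0 = v h i"
  using u_v e_idem[of h 0] mu_pos[of h] by (metis mult.assoc)+

lemma M_eq_blk_off: "M = blk_off mu q"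
  by (simp add: mu_total_def blk_off_def)

lemma blk_off_add_less_M: "k < q \<Longrightarrow> blk_off mu k + mu k \<le> M"
  using blk_off_mono[of "Suc k" q mu] by (simp add: blk_off_Suc M_eq_blk_off)

lemma M_pos: "k < q \<Longrightarrow> 0 < M"
  using blk_off_add_less_M[of k] mu_pos[of k] by linarith

lemma M_decomp: "a < M \<Longrightarrow> \<exists>h<q. \<exists>i<mu h. a = blk_off mu h + i"
  using blk_off_decomp[of a mu q] by (simp add: M_eq_blk_off)

lemma AW_phi_mult:
  assumes "a < M" "b < M"
  shows "AW_phi q mu u v (x * y) a b = (\<Sum>c<M. AW_phi q mu u v x a c * AW_phi q mu u v y c b)"
proof -
  obtain h i where hi: "h < q" "i < mu h" "a = blk_off mu h + i" using M_decomp assms(1) by blast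
  obtain k j where kj: "k < q" "j < mu k" "b = blk_off mu k + j" using M_decomp assms(2) by blast
  have "(\<Sum>c<M. AW_phi q mu u v x a c * AW_phi q mu u v y c b) =
      (\<Sum>h'<q. \<Sum>i'<mu h'. (u h i * x) * (v h' i' * u h' i') * (y * v k j))"
    unfolding M_eq_blk_off sum_blk_off using hi kj by (intro sum.cong refl) (simp add: AW_phi_eval mult.assoc)
  also have "\<dots> = (u h i * x) * (\<Sum>h'<q. \<Sum>i'<mu h'. e h' i') * (y * v k j)"
    using u_v by (simp add: sum_distrib_left sum_distrib_right)
  finally show ?thesis using hi kj by (simp add: AW_phi_eval e_sum mult.assoc)
qed

lemma AW_phi_sum:
  assumes "a < M" "b < M"
  shows "AW_phi q mu u v (\<Sum>t\<in>A. f t) a b = (\<Sum>t\<in>A. AW_phi q mu u v (f t) a b)"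
proof -
  obtain h i where "h < q" "i < mu h" "a = blk_off mu h + i" using M_decomp assms(1) by blast
  moreover obtain k j where "k < q" "j < mu k" "b = blk_off mu k + j" using M_decomp assms(2) by blast
  ultimately show ?thesis by (simp add: AW_phi_eval sum_distrib_left sum_distrib_right)
qed

lemma AW_phi_mat_comp:
  assumes "0 < q"
  shows "AW_phi_mat q mu u v (mat_comp n H2 H1) p s =
    (\<Sum>r<M * n. AW_phi_mat q mu u v H2 p r * AW_phi_mat q mu u v H1 r s)"
proof -
  have M: "0 < M" using M_pos[OF assms] .
  then have "p mod M < M" "s mod M < M" by auto
  then have "AW_phi_mat q mu u v (mat_comp n H2 H1) p s = (\<Sum>a<n. \<Sum>c<M.
      AW_phi q mu u v (H2 (p div M) a) (p mod M) c * AW_phi q mu u v (H1 a (s div M)) c (s mod M))"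
    unfolding AW_phi_mat_def mat_comp_def by (simp add: AW_phi_sum AW_phi_mult)
  also have "\<dots> = (\<Sum>r<M * n. AW_phi_mat q mu u v H2 p r * AW_phi_mat q mu u v H1 r s)"
    unfolding sum_lessThan_mult AW_phi_mat_def using M by simp
  finally show ?thesis .
qed

lemma dist_idx_div: "k < q \<Longrightarrow> dist_idx q mu k j div M = j div mu k"
  and dist_idx_mod: "k < q \<Longrightarrow> dist_idx q mu k j mod M = blk_off mu k + j mod mu k"
proof -
  assume k: "k < q"
  have "blk_off mu k + j mod mu k < M"
    using blk_off_add_less_M[OF k] mod_less_divisor[OF mu_pos[OF k], of j] by linarith
  then show "dist_idx q mu k j div M = j div mu k" "dist_idx q mu k j mod M = blk_off mu k + j mod mu k"
    unfolding dist_idx_def by (simp_all add: add.assoc)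
qed

lemma inj_dist_idx: "k < q \<Longrightarrow> inj_on (dist_idx q mu k) A"
  by (rule inj_onI) (metis dist_idx_div dist_idx_mod div_mult_mod_eq add_left_cancel)

lemma dist_idx_less: "k < q \<Longrightarrow> j < mu k * n \<Longrightarrow> dist_idx q mu k j < M * n"
proof -
  assume k: "k < q" and j: "j < mu k * n"
  have "j div mu k < n" using j mu_pos[OF k] by (simp add: div_less_iff_less_mult mult.commute)
  define r where "r = dist_idx q mu k j mod M"
  have "dist_idx q mu k j = j div mu k * M + r"
    unfolding r_def using dist_idx_div[OF k, of j] by (metis div_mult_mod_eq)
  moreover have "r < M" unfolding r_def using M_pos[OF k] by (rule mod_less_divisor)
  ultimately have "dist_idx q mu k j < Suc (j div mu k) * M" by simp
  also have "\<dots> \<le> n * M" using \<open>j div mu k < n\<close> by (intro mult_right_mono) auto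
  finally show ?thesis by (simp add: mult.commute)
qed

lemma phi_col_mult_e: "k < q \<Longrightarrow> phi_col H k j p * e k 0 = phi_col H k j p"
proof -
  assume k: "k < q"
  obtain h i where hi: "h < q" "i < mu h" "p mod M = blk_off mu h + i"
    using M_decomp M_pos[OF k] by (meson mod_less_divisor)
  have jk: "j mod mu k < mu k" using mu_pos[OF k] by simp
  show ?thesis unfolding AW_phi_mat_def dist_idx_mod[OF k] hi(3) AW_phi_eval[OF hi(1,2) k jk]
    using v_mult_e[OF k jk] by (simp add: mult.assoc)
qed

lemma e_mult_AW_phi_mat:
  "k < q \<Longrightarrow> e k 0 * AW_phi_mat q mu u v H (dist_idx q mu k i) s = AW_phi_mat q mu u v H (dist_idx q mu k i) s"
proof -
  assume k: "k < q"
  obtain h j where hj: "h < q" "j < mu h" "s mod M = blk_off mu h + j"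
    using M_decomp M_pos[OF k] by (meson mod_less_divisor)
  have ik: "i mod mu k < mu k" using mu_pos[OF k] by simp
  show ?thesis unfolding AW_phi_mat_def dist_idx_mod[OF k] hj(3) AW_phi_eval[OF k ik hj(1,2)]
    using e_mult_u[OF k ik] by (simp add: mult.assoc[symmetric])
qed

lemma residue_corner_division_ring:
  assumes k: "k < q"
  obtains \<epsilon> where "\<epsilon> - e k 0 \<in> Jac" "\<epsilon> \<notin> Jac"
    "\<And>x. \<epsilon> * x * \<epsilon> \<notin> Jac \<Longrightarrow>
       \<exists>y. \<epsilon> * x * \<epsilon> * (\<epsilon> * y * \<epsilon>) - \<epsilon> \<in> Jac \<and> \<epsilon> * y * \<epsilon> * (\<epsilon> * x * \<epsilon>) - \<epsilon> \<in> Jac"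
proof -
  obtain eps :: "nat \<Rightarrow> nat \<Rightarrow> nat \<Rightarrow> 'a" where
    "\<forall>k<q. \<forall>i<mu k. eps k i i - e k i \<in> Jac" and
    "\<forall>k<q. eps k 0 0 \<notin> Jac \<and> (\<forall>x. eps k 0 0 * x * eps k 0 0 \<notin> Jac \<longrightarrow>
       (\<exists>y. eps k 0 0 * x * eps k 0 0 * (eps k 0 0 * y * eps k 0 0) - eps k 0 0 \<in> Jac \<and>
            eps k 0 0 * y * eps k 0 0 * (eps k 0 0 * x * eps k 0 0) - eps k 0 0 \<in> Jac))"
    using AW unfolding AW_setup_def by (elim conjE exE) (rule that)
  then show ?thesis using that[of "eps k 0 0"] k mu_pos[OF k] by blast
qed

lemma e_notin_Jac: "k < q \<Longrightarrow> e k 0 \<notin> Jac"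
  by (metis residue_corner_division_ring Jac_cong_in)

lemma corner_inverse_mod_Jac:
  assumes k: "k < q" and y: "y \<in> corner_ring (e k 0)" "y \<notin> Jac"
  shows "\<exists>y'\<in>corner_ring (e k 0). y * y' - e k 0 \<in> Jac \<and> y' * y - e k 0 \<in> Jac"
proof -
  let ?E = "e k 0"
  obtain \<epsilon> where \<epsilon>: "\<epsilon> - ?E \<in> Jac"
    and inv: "\<And>x. \<epsilon> * x * \<epsilon> \<notin> Jac \<Longrightarrow>
       \<exists>y. \<epsilon> * x * \<epsilon> * (\<epsilon> * y * \<epsilon>) - \<epsilon> \<in> Jac \<and> \<epsilon> * y * \<epsilon> * (\<epsilon> * x * \<epsilon>) - \<epsilon> \<in> Jac"
    using residue_corner_division_ring[OF k] by metis
  have sandwich: "?E * x * ?E - \<epsilon> * x * \<epsilon> \<in> Jac" for x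
    using Jac_cong_mult[OF Jac_cong_mult[OF Jac_cong_sym[OF \<epsilon>], of x x] Jac_cong_sym[OF \<epsilon>]] Jac_zero
    by simp
  have "?E * y * ?E = y" using y(1) in_corner_ring_iff[OF e_idem[OF k mu_pos[OF k]]] by simp
  then have y_eps: "y - \<epsilon> * y * \<epsilon> \<in> Jac" using sandwich[of y] by simp
  then have "\<epsilon> * y * \<epsilon> \<notin> Jac" using y(2) Jac_cong_in by blast
  then obtain z where z: "\<epsilon> * y * \<epsilon> * (\<epsilon> * z * \<epsilon>) - \<epsilon> \<in> Jac" "\<epsilon> * z * \<epsilon> * (\<epsilon> * y * \<epsilon>) - \<epsilon> \<in> Jac"
    using inv by blast
  let ?y' = "?E * z * ?E"
  have "?y' \<in> corner_ring ?E" by (auto simp: corner_ring_def)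
  moreover have "y * ?y' - ?E \<in> Jac" "?y' * y - ?E \<in> Jac"
    using Jac_cong_trans[OF Jac_cong_trans[OF Jac_cong_mult[OF y_eps sandwich] z(1)] \<epsilon>]
      Jac_cong_trans[OF Jac_cong_trans[OF Jac_cong_mult[OF sandwich y_eps] z(2)] \<epsilon>] by simp_all
  ultimately show ?thesis by blast
qed

lemma corner_columns_phi_col:
  "k < q \<Longrightarrow> corner_columns (phi_col H k) (M * n) (mu k * n) (dist_idx q mu k) (e k 0)"
  by unfold_locales
    (auto simp: e_idem mu_pos e_notin_Jac inj_dist_idx dist_idx_less phi_col_mult_e e_mult_AW_phi_mat
      corner_inverse_mod_Jac)

lemma frakS_eq_least_basis:
  "frakS q mu e u v m n H k S =
    least_basis_mod_Jac (phi_col H k) (mu k * m) (M * n) (mu k * n) (dist_idx q mu k) (e k 0) S"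
  by (simp add: frakS_def least_basis_mod_Jac_def basis_mod_Jac_def is_basis_set_def indep_mod_Jac_def
      spans_mod_Jac_def pivot_vec_def corner_eq_corner_ring lexordp_conv_lexord)

lemma column_adapted_iff:
  "column_adapted q mu e u v m n H \<longleftrightarrow> lin_surj m n H \<and>
    (\<forall>k<q. \<exists>S.
      least_basis_mod_Jac (phi_col H k) (mu k * m) (M * n) (mu k * n) (dist_idx q mu k) (e k 0) S \<and>
      (\<forall>i<mu k * n. \<forall>p<M * n.
        phi_col H k (sorted_list_of_set S ! i) p = unit_col (dist_idx q mu k) (e k 0) i p))"
proof -
  txt \<open>Condition (i) of column-adaptedness follows from (ii).\<close>
  have exact: "((\<forall>i<N. \<forall>p<R. f i p - g i p \<in> Jac) \<and> (\<forall>i<N. \<forall>p<R. f i p = g i p))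
      \<longleftrightarrow> (\<forall>i<N. \<forall>p<R. f i p = g i p)" for N R and f g :: "nat \<Rightarrow> nat \<Rightarrow> 'a"
    using Jac_zero by auto
  show ?thesis unfolding column_adapted_def Let_def frakS_eq_least_basis exact by (simp add: unit_col_def)
qed

end

theorem lemma4p3:
  fixes e u v :: "nat \<Rightarrow> nat \<Rightarrow> 'a::ring_1" and mu :: "nat \<Rightarrow> nat" and q :: nat
    and H1 H2 :: "nat \<Rightarrow> nat \<Rightarrow> 'a" and m n l :: nat
  assumes "right_artinian TYPE('a)"
    and "AW_setup q mu e u v"
    and "column_adapted q mu e u v m n H1"
    and "column_adapted q mu e u v n l H2"
  shows "column_adapted q mu e u v m l (mat_comp n H2 H1)"
proof -
  interpret artin_wedderburn q mu e u v using assms(2) by (rule artin_wedderburn.intro)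
  have phi_comp: "phi_col (mat_comp n H2 H1) k j p
      = (\<Sum>r<M * n. AW_phi_mat q mu u v H2 p r * phi_col H1 k j r)" if "k < q" for k j p
    using AW_phi_mat_comp that by simp
  note comp = least_basis_comp[OF corner_columns_phi_col corner_columns_phi_col corner_columns_phi_col
      phi_comp refl]
  show ?thesis
    using assms(3,4) lin_surj_comp comp unfolding column_adapted_iff by blast
qed

end
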